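(* The action of $W_d(\mathbb C)$ on $L^{(d-1)}\cap U_d(\mathbb C)$ is free.
   Context: Fix $d\ge2$. $V=\mathbb C^d\oplus\mathfrak{so}(d,\mathbb C)$, elements $(v,M)$ with $v=(c_1,\dots,c_d)^\top$, $M$ complex skew-symmetric, $M_{ij}=c_{ij}=-M_{ji}$ for $i<j$; $O_d(\mathbb C)=\{A:AA^\top=I\}$ acts by $A\cdot(v,M)=(Av,AMA^\top)$. $W_d(\mathbb C)$ is the group of diagonal matrices with entries in $\{-1,1\}$. $L^{(1)}=\{c_1=\dots=c_{d-1}=0\}$, and for $2\le i\le d-1$, $L^{(i)}=\{(v,M)\in L^{(i-1)}:c_{k(d-i+2)}=0,\ 1\le k\le d-i\}$ (so on $L^{(d-1)}$ only $c_d,c_{12},c_{23},\dots,c_{(d-1)d}$ can be nonzero). Let $f_1=c_1^2+\dots+c_d^2$; for $2\le i\le d-1$ let $f_i$ be the $O_d(\mathbb C)$-invariant rational function on $V$ with $f_i|_{L^{(i-1)}}=c_{1(d-i+2)}^2+\dots+c_{(d-i+1)(d-i+2)}^2$; let $f_d$ be the invariant rational function with $f_d|_{L^{(d-1)}}=c_{12}^2$ (these exist and are uniquely determined). $U_d(\mathbb C)$ is the set of points in the domain of every $f_k$ with $\prod_kf_k\neq0$. A group action is free if every stabilizer is trivial. *)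

theory Defs
  imports Complex_Main
begin

text \<open>Points of V = C^d (+) so(d,C): a vector v (indices 1..d, zero elsewhere)
  and a skew-symmetric matrix M (indices 1..d, zero elsewhere); c_i = v i, c_ij = M i j.\<close>

type_synonym pt = "(nat \<Rightarrow> complex) \<times> (nat \<Rightarrow> nat \<Rightarrow> complex)"
type_synonym cmat = "nat \<Rightarrow> nat \<Rightarrow> complex"

definition Vsp :: "nat \<Rightarrow> pt set" where
  "Vsp d = {(v, M). (\<forall>i. i \<notin> {1..d} \<longrightarrow> v i = 0)
                  \<and> (\<forall>i j. M i j = - M j i)
                  \<and> (\<forall>i j. i \<notin> {1..d} \<or> j \<notin> {1..d} \<longrightarrow> M i j = 0)}"

definition idm :: "nat \<Rightarrow> cmat" where
  "idm d = (\<lambda>i j. if i = j \<and> i \<in> {1..d} then 1 else 0)"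

definition mmul :: "nat \<Rightarrow> cmat \<Rightarrow> cmat \<Rightarrow> cmat" where
  "mmul d A B = (\<lambda>i j. \<Sum>k=1..d. A i k * B k j)"

definition mvmul :: "nat \<Rightarrow> cmat \<Rightarrow> (nat \<Rightarrow> complex) \<Rightarrow> (nat \<Rightarrow> complex)" where
  "mvmul d A v = (\<lambda>i. \<Sum>k=1..d. A i k * v k)"

definition mtrans :: "cmat \<Rightarrow> cmat" where
  "mtrans A = (\<lambda>i j. A j i)"

definition Od :: "nat \<Rightarrow> cmat set" where
  "Od d = {A. (\<forall>i j. i \<notin> {1..d} \<or> j \<notin> {1..d} \<longrightarrow> A i j = 0)
             \<and> mmul d A (mtrans A) = idm d}"

definition act :: "nat \<Rightarrow> cmat \<Rightarrow> pt \<Rightarrow> pt" where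
  "act d A x = (mvmul d A (fst x), mmul d (mmul d A (snd x)) (mtrans A))"

definition Wd :: "nat \<Rightarrow> cmat set" where
  "Wd d = {A. \<exists>e. (\<forall>i\<in>{1..d}. e i = 1 \<or> e i = -1)
                 \<and> A = (\<lambda>i j. if i = j \<and> i \<in> {1..d} then e i else 0)}"

fun Lset :: "nat \<Rightarrow> nat \<Rightarrow> pt set" where
  "Lset d 0 = Vsp d"
| "Lset d (Suc 0) = {x \<in> Vsp d. \<forall>j\<in>{1..d-1}. fst x j = 0}"
| "Lset d (Suc (Suc i)) =
     {x \<in> Lset d (Suc i). \<forall>k\<in>{1..d - Suc (Suc i)}. snd x k (d - Suc (Suc i) + 2) = 0}"

inductive_set polyfun :: "(pt \<Rightarrow> complex) set" where
  pf_const: "(\<lambda>x. c) \<in> polyfun"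
| pf_vcoord: "(\<lambda>x. fst x i) \<in> polyfun"
| pf_mcoord: "(\<lambda>x. snd x i j) \<in> polyfun"
| pf_add: "p \<in> polyfun \<Longrightarrow> q \<in> polyfun \<Longrightarrow> (\<lambda>x. p x + q x) \<in> polyfun"
| pf_mult: "p \<in> polyfun \<Longrightarrow> q \<in> polyfun \<Longrightarrow> (\<lambda>x. p x * q x) \<in> polyfun"

text \<open>A rational function on V, modelled as a partial function (None = undefined).\<close>
definition is_ratfun :: "nat \<Rightarrow> (pt \<Rightarrow> complex option) \<Rightarrow> bool" where
  "is_ratfun d F \<longleftrightarrow>
     (\<exists>p q. p \<in> polyfun \<and> q \<in> polyfun \<and> (\<exists>x\<in>Vsp d. q x \<noteq> 0) \<and>
        (\<forall>x. x \<notin> Vsp d \<longrightarrow> F x = None) \<and>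
        (\<forall>x\<in>Vsp d. F x \<noteq> None \<longleftrightarrow>
            (\<exists>p' q'. p' \<in> polyfun \<and> q' \<in> polyfun \<and> q' x \<noteq> 0 \<and>
                     (\<forall>y\<in>Vsp d. p' y * q y = p y * q' y))) \<and>
        (\<forall>x\<in>Vsp d. \<forall>p' q'. p' \<in> polyfun \<longrightarrow> q' \<in> polyfun \<longrightarrow> q' x \<noteq> 0 \<longrightarrow>
                     (\<forall>y\<in>Vsp d. p' y * q y = p y * q' y) \<longrightarrow> F x = Some (p' x / q' x)))"

definition dom_rf :: "(pt \<Rightarrow> complex option) \<Rightarrow> pt set" where
  "dom_rf F = {x. F x \<noteq> None}"

definition Od_invariant :: "nat \<Rightarrow> (pt \<Rightarrow> complex option) \<Rightarrow> bool" where
  "Od_invariant d F \<longleftrightarrow> (\<forall>A\<in>Od d. \<forall>x\<in>Vsp d. F (act d A x) = F x)"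

definition f1 :: "nat \<Rightarrow> pt \<Rightarrow> complex option" where
  "f1 d x = (if x \<in> Vsp d then Some (\<Sum>i=1..d. (fst x i)^2) else None)"

text \<open>Restriction of f_k to L^(k-1), for 2 <= k <= d:
  c_{1(d-k+2)}^2 + ... + c_{(d-k+1)(d-k+2)}^2 ; for k = d this is c_12^2.\<close>
definition grestr :: "nat \<Rightarrow> nat \<Rightarrow> pt \<Rightarrow> complex" where
  "grestr d k x = (if k = d then (snd x 1 2)^2
                   else (\<Sum>j=1..d-k+1. (snd x j (d-k+2))^2))"

definition is_fk :: "nat \<Rightarrow> nat \<Rightarrow> (pt \<Rightarrow> complex option) \<Rightarrow> bool" where
  "is_fk d k F \<longleftrightarrow> is_ratfun d F \<and> Od_invariant d F \<and>
     Lset d (k-1) \<inter> dom_rf F \<noteq> {} \<and>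
     (\<forall>x\<in>Lset d (k-1) \<inter> dom_rf F. F x = Some (grestr d k x))"

definition Ud :: "nat \<Rightarrow> (nat \<Rightarrow> pt \<Rightarrow> complex option) \<Rightarrow> pt set" where
  "Ud d F = {x \<in> Vsp d. (\<forall>k\<in>{1..d}. F k x \<noteq> None) \<and> (\<Prod>k=1..d. the (F k x)) \<noteq> 0}"

definition free_on :: "nat \<Rightarrow> cmat set \<Rightarrow> pt set \<Rightarrow> bool" where
  "free_on d G S \<longleftrightarrow> (\<forall>x\<in>S. \<forall>A\<in>G. act d A x = x \<longrightarrow> A = idm d)"

end

theory Submission
  imports Defs
begin

text \<open>On \<open>L^(d-1)\<close> the only coordinates that may be nonzero are \<open>c_d\<close> and the
  superdiagonal entries \<open>c_(i,i+1)\<close>; there \<open>f_1 = c_d^2\<close> and \<open>f_k = c_(d-k+1,d-k+2)^2\<close>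
  for \<open>2 \<le> k \<le> d\<close>, so on \<open>U_d\<close> all these coordinates are nonzero. A sign matrix
  \<open>diag(e)\<close> multiplies \<open>c_d\<close> by \<open>e_d\<close> and \<open>c_(i,i+1)\<close> by \<open>e_i e_(i+1)\<close>; if it fixes
  such a point, then \<open>e_d = 1\<close> and \<open>e_i = e_(i+1)\<close> for all \<open>i\<close>, so it is the identity.\<close>

lemma Lset_antimono: "i \<le> j \<Longrightarrow> Lset d j \<subseteq> Lset d i"
proof (induction j rule: dec_induct)
  case (step j)
  then show ?case by (cases j) auto
qed simp

lemma Lset_last_above_superdiag_zero:
  assumes "x \<in> Lset d (d - 1)" "1 \<le> j" "j + 2 \<le> m" "m \<le> d"
  shows "snd x j m = 0"
proof -
  define n where "n = d - m"
  have "Lset d (d - 1) \<subseteq> Lset d (Suc (Suc n))"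
    using assms n_def by (intro Lset_antimono) auto
  then have "x \<in> Lset d (Suc (Suc n))" using assms(1) by blast
  then have "\<forall>k\<in>{1..d - Suc (Suc n)}. snd x k (d - Suc (Suc n) + 2) = 0"
    by (simp only: Lset.simps) blast
  moreover have "d - Suc (Suc n) = m - 2" "d - Suc (Suc n) + 2 = m"
    using assms n_def by auto
  moreover have "j \<in> {1..m - 2}" using assms by auto
  ultimately show ?thesis by auto
qed

lemma f1_on_Lset_1:
  assumes "x \<in> Lset d 1" "1 \<le> d"
  shows "f1 d x = Some ((fst x d)\<^sup>2)"
proof -
  obtain n where d: "d = Suc n" using assms(2) by (cases d) auto
  have "(\<Sum>i=1..n. (fst x i)\<^sup>2) = 0" using assms(1) d by (intro sum.neutral) simp
  then show ?thesis using assms(1) d by (simp add: f1_def)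
qed

lemma grestr_on_Lset_last:
  assumes "x \<in> Lset d (d - 1)" "2 \<le> k" "k \<le> d"
  shows "grestr d k x = (snd x (d - k + 1) (d - k + 2))\<^sup>2"
proof (cases "k = d")
  case False
  define n where "n = d - k"
  have "(\<Sum>j=1..n. (snd x j (n + 2))\<^sup>2) = 0"
    using Lset_last_above_superdiag_zero[OF assms(1)] assms n_def by (intro sum.neutral) auto
  then have "(\<Sum>j=1..Suc n. (snd x j (n + 2))\<^sup>2) = (snd x (Suc n) (n + 2))\<^sup>2"
    by simp
  then show ?thesis using False n_def by (simp add: grestr_def)
qed (simp add: grestr_def numeral_2_eq_2)

lemma is_fk_on_Lset_last:
  assumes "is_fk d k F" "2 \<le> k" "k \<le> d" "x \<in> Lset d (d - 1)" "F x \<noteq> None"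
  shows "F x = Some ((snd x (d - k + 1) (d - k + 2))\<^sup>2)"
proof -
  have "Lset d (d - 1) \<subseteq> Lset d (k - 1)" using assms(3) by (intro Lset_antimono) auto
  then have "x \<in> Lset d (k - 1)" using assms(4) by blast
  then have "F x = Some (grestr d k x)"
    using assms(1,5) unfolding is_fk_def dom_rf_def by blast
  then show ?thesis using grestr_on_Lset_last[OF assms(4,2,3)] by simp
qed

lemma Ud_value_nonzero:
  assumes "x \<in> Ud d f" "k \<in> {1..d}"
  obtains c where "f k x = Some c" "c \<noteq> 0"
proof -
  have "f k x \<noteq> None" "the (f k x) \<noteq> 0" using assms by (auto simp: Ud_def)
  then show thesis using that by auto
qed

lemma Lset_last_Ud_coords_nonzero:
  assumes "d \<ge> 2" "f 1 = f1 d" "\<forall>k\<in>{2..d}. is_fk d k (f k)"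
    and "x \<in> Lset d (d - 1) \<inter> Ud d f"
  shows "fst x d \<noteq> 0" "\<forall>i\<in>{1..<d}. snd x i (Suc i) \<noteq> 0"
proof -
  have xL: "x \<in> Lset d (d - 1)" and xU: "x \<in> Ud d f" using assms(4) by auto
  have "Lset d (d - 1) \<subseteq> Lset d 1" using assms(1) by (intro Lset_antimono) auto
  then have "x \<in> Lset d 1" using xL by blast
  then have "f 1 x = Some ((fst x d)\<^sup>2)" using assms(1,2) f1_on_Lset_1 by simp
  then show "fst x d \<noteq> 0"
    using Ud_value_nonzero[OF xU, of 1] assms(1) by auto
  show "\<forall>i\<in>{1..<d}. snd x i (Suc i) \<noteq> 0"
  proof
    fix i assume i: "i \<in> {1..<d}"
    define k where "k = d - i + 1"
    have k: "2 \<le> k" "k \<le> d" "d - k + 1 = i" "d - k + 2 = Suc i" using i k_def by auto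
    obtain c where c: "f k x = Some c" "c \<noteq> 0" using Ud_value_nonzero[OF xU, of k] k by auto
    then have "c = (snd x i (Suc i))\<^sup>2"
      using is_fk_on_Lset_last[of d k "f k" x] assms(3) xL k by auto
    then show "snd x i (Suc i) \<noteq> 0" using c by simp
  qed
qed

definition diagm :: "nat \<Rightarrow> (nat \<Rightarrow> complex) \<Rightarrow> cmat" where
  "diagm d e = (\<lambda>i j. if i = j \<and> i \<in> {1..d} then e i else 0)"

lemma Wd_eq_diagm: "Wd d = {diagm d e | e. \<forall>i\<in>{1..d}. e i = 1 \<or> e i = -1}"
  by (auto simp: Wd_def diagm_def)

lemma sum_diagm_mult:
  "(\<Sum>k=1..d. diagm d e i k * a k) = (if i \<in> {1..d} then e i * a i else 0)"
proof -
  have "(\<Sum>k=1..d. diagm d e i k * a k)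
      = (\<Sum>k=1..d. if i = k then (if i \<in> {1..d} then e i * a i else 0) else 0)"
    by (rule sum.cong) (auto simp: diagm_def)
  then show ?thesis by simp
qed

lemma mvmul_diagm: "mvmul d (diagm d e) v i = (if i \<in> {1..d} then e i * v i else 0)"
  unfolding mvmul_def by (rule sum_diagm_mult)

lemma mmul_diagm_left: "mmul d (diagm d e) M i j = (if i \<in> {1..d} then e i * M i j else 0)"
  unfolding mmul_def by (rule sum_diagm_mult)

lemma mmul_diagm_right:
  "mmul d M (mtrans (diagm d e)) i j = (if j \<in> {1..d} then M i j * e j else 0)"
  using sum_diagm_mult[of d e j "M i"] by (simp add: mmul_def mtrans_def mult.commute)

lemma act_diagm:
  "act d (diagm d e) (v, M) =
     (\<lambda>i. if i \<in> {1..d} then e i * v i else 0,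
      \<lambda>i j. if i \<in> {1..d} \<and> j \<in> {1..d} then e i * M i j * e j else 0)"
  by (simp add: act_def fun_eq_iff mvmul_diagm mmul_diagm_left mmul_diagm_right)

lemma sign_eq_if_fixes_nonzero:
  fixes a b c :: complex
  assumes "b = 1 \<or> b = -1" "a * c * b = c" "c \<noteq> 0"
  shows "a = b"
proof -
  have "a * b = 1" using assms(2,3) by (simp add: mult.commute mult.left_commute)
  moreover have "b * b = 1" using assms(1) by auto
  ultimately show ?thesis by (metis mult.assoc mult_1 mult_1_right)
qed

lemma eq_last_if_consecutive_eq:
  assumes "\<forall>i\<in>{1..<d}. e i = e (Suc i)" "i \<in> {1..d}"
  shows "e i = e d"
proof -
  from assms(2) have "i \<le> d" "1 \<le> i" by auto
  then show ?thesis
    by (induction rule: inc_induct) (use assms(1) in auto)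
qed

lemma diagm_fixing_point_eq_idm:
  assumes signs: "\<forall>i\<in>{1..d}. e i = 1 \<or> e i = -1"
    and fixed: "act d (diagm d e) (v, M) = (v, M)"
    and "1 \<le> d" "v d \<noteq> 0" "\<forall>i\<in>{1..<d}. M i (Suc i) \<noteq> 0"
  shows "diagm d e = idm d"
proof -
  have v_fixed: "(\<lambda>i. if i \<in> {1..d} then e i * v i else 0) = v"
    and M_fixed: "(\<lambda>i j. if i \<in> {1..d} \<and> j \<in> {1..d} then e i * M i j * e j else 0) = M"
    using fixed unfolding act_diagm by simp_all
  have "e d = 1" using fun_cong[OF v_fixed, of d] assms(3,4) by simp
  moreover have consecutive: "\<forall>i\<in>{1..<d}. e i = e (Suc i)"
  proof
    fix i assume i: "i \<in> {1..<d}"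
    have "e i * M i (Suc i) * e (Suc i) = M i (Suc i)"
      using fun_cong[OF fun_cong[OF M_fixed, of i], of "Suc i"] i by simp
    moreover have "e (Suc i) = 1 \<or> e (Suc i) = -1" using signs i by simp
    ultimately show "e i = e (Suc i)"
      using sign_eq_if_fixes_nonzero assms(5) i by blast
  qed
  ultimately have "\<forall>i\<in>{1..d}. e i = 1" using eq_last_if_consecutive_eq[OF consecutive] by simp
  then show ?thesis by (auto simp: diagm_def idm_def fun_eq_iff)
qed

theorem proposition3p8:
  fixes d :: nat and f :: "nat \<Rightarrow> pt \<Rightarrow> complex option"
  assumes "d \<ge> 2"
    and "f 1 = f1 d"
    and "\<forall>k\<in>{2..d}. is_fk d k (f k)"
  shows "free_on d (Wd d) (Lset d (d - 1) \<inter> Ud d f)"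
  unfolding free_on_def
proof (intro ballI impI)
  fix x A
  assume x: "x \<in> Lset d (d - 1) \<inter> Ud d f" and "A \<in> Wd d" and fixed: "act d A x = x"
  then obtain e where signs: "\<forall>i\<in>{1..d}. e i = 1 \<or> e i = -1" and A: "A = diagm d e"
    by (auto simp: Wd_eq_diagm)
  obtain v M where vM: "x = (v, M)" by fastforce
  note nonzero = Lset_last_Ud_coords_nonzero[OF assms x, unfolded vM fst_conv snd_conv]
  show "A = idm d"
    using diagm_fixing_point_eq_idm[OF signs] fixed nonzero assms(1) unfolding A vM by simp
qed

end
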